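(* Let $G$ be a second countable locally compact group, $\Omega$ a homogeneous space of $G$, $F$ a closed subgroup of $G$, and $y\in\Omega$ such that $\overline{Fy}$ is a compact $F$-minimal subset of $\Omega$ but $F/(F\cap G_y)$ is not compact (equivalently $Fy$ is not compact). Then the identity $e$ lies in the closure of $\{g\in G\setminus F: gy\in Fy\}$.
   Context: $G_y=\{h\in G: hy=y\}$ is the stabilizer of $y$. For a closed subgroup $F\subset G$, a closed $F$-invariant subset $Y\subset\Omega$ is called $F$-minimal if it contains no proper nonempty closed $F$-invariant subset, i.e. $Fy$ is dense in $Y$ for every $y\in Y$. *)

theory Defs
  imports "HOL-Analysis.Analysis"
begin

text \<open>Groups are written additively (class group_add, which is NOT assumed commutative):
  0 is the identity e, a + b is the product ab, - a the inverse.\<close>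

definition topological_group :: "'g::{group_add,topological_space} itself \<Rightarrow> bool" where
  "topological_group _ \<longleftrightarrow>
     continuous_on UNIV (\<lambda>p::'g \<times> 'g. fst p + snd p) \<and> continuous_on UNIV (uminus :: 'g \<Rightarrow> 'g)"

definition closed_subgroup :: "'g::{group_add,topological_space} set \<Rightarrow> bool" where
  "closed_subgroup F \<longleftrightarrow> closed F \<and> 0 \<in> F \<and> (\<forall>a\<in>F. \<forall>b\<in>F. a + b \<in> F) \<and> (\<forall>a\<in>F. - a \<in> F)"

text \<open>Omega is a homogeneous space of G: a Hausdorff space with a continuous transitive
  G-action such that the orbit maps g \<mapsto> g x are open (so that G/G_x \<cong> Omega).\<close>
definition homogeneous_space :: "('g::{group_add,topological_space} \<Rightarrow> 'o::topological_space \<Rightarrow> 'o) \<Rightarrow> bool" where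
  "homogeneous_space act \<longleftrightarrow>
     (\<forall>x. act 0 x = x) \<and> (\<forall>a b x. act (a + b) x = act a (act b x)) \<and>
     continuous_on UNIV (\<lambda>p. act (fst p) (snd p)) \<and>
     (\<forall>x z. \<exists>g. act g x = z) \<and>
     (\<forall>x U. open U \<longrightarrow> open ((\<lambda>g. act g x) ` U))"

definition stabilizer :: "('g \<Rightarrow> 'o \<Rightarrow> 'o) \<Rightarrow> 'o \<Rightarrow> 'g set" where
  "stabilizer act y = {h. act h y = y}"

definition invariant_under :: "('g \<Rightarrow> 'o \<Rightarrow> 'o) \<Rightarrow> 'g set \<Rightarrow> 'o set \<Rightarrow> bool" where
  "invariant_under act F Y \<longleftrightarrow> (\<forall>f\<in>F. \<forall>y\<in>Y. act f y \<in> Y)"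

definition F_minimal :: "('g \<Rightarrow> 'o::topological_space \<Rightarrow> 'o) \<Rightarrow> 'g set \<Rightarrow> 'o set \<Rightarrow> bool" where
  "F_minimal act F Y \<longleftrightarrow> closed Y \<and> Y \<noteq> {} \<and> invariant_under act F Y \<and>
     (\<forall>Z. Z \<subseteq> Y \<and> Z \<noteq> {} \<and> closed Z \<and> invariant_under act F Z \<longrightarrow> Z = Y)"

definition lcoset :: "'g::group_add \<Rightarrow> 'g set \<Rightarrow> 'g set" where
  "lcoset f H = (\<lambda>h. f + h) ` H"

definition coset_space_top :: "'g::{group_add,topological_space} set \<Rightarrow> 'g set \<Rightarrow> 'g set topology" where
  "coset_space_top F H = topology (\<lambda>S. S \<subseteq> (\<lambda>f. lcoset f H) ` F \<and>
       openin (top_of_set F) {f \<in> F. lcoset f H \<in> S})"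

end

theory Submission
  imports Defs
begin

text \<open>
  Suppose the identity is not in the closure of the set of ``returns''
  {g \<notin> F. g y \<in> F y}.  Then some relatively compact open neighbourhood U of 0 (inside a
  compact K) satisfies: g \<in> U and g y \<in> F y imply g \<in> F.  Consequently the open set
  V = U y meets Y = closure (F y) only inside the compact set (K \<inter> F) y \<subseteq> F y, i.e. the
  orbit F y is open in Y.  Then Y - F y = Y - \<Union>f\<in>F. f V is closed and F-invariant, so by
  minimality it is empty: the orbit F y is compact.  Finitely many translates f_i V cover it,
  which yields a compact C \<subseteq> F with F = C (F \<inter> G_y); hence F/(F \<inter> G_y) is compact,
  contradicting the hypothesis.
\<close>

text \<open>The algebraic subgroup property, without the closedness required by closed_subgroup;
  needed because the stabilizer F \<inter> G_y enters only as a subgroup.\<close>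
definition subgroup_set :: "'g::group_add set \<Rightarrow> bool" where
  "subgroup_set H \<longleftrightarrow> 0 \<in> H \<and> (\<forall>a\<in>H. \<forall>b\<in>H. a + b \<in> H) \<and> (\<forall>a\<in>H. - a \<in> H)"

lemma closed_subgroup_imp_subgroup_set: "closed_subgroup F \<Longrightarrow> subgroup_set F"
  by (simp add: closed_subgroup_def subgroup_set_def)

lemma subgroup_set_Int: "subgroup_set F \<Longrightarrow> subgroup_set H \<Longrightarrow> subgroup_set (F \<inter> H)"
  by (simp add: subgroup_set_def)

lemma subgroup_set_translate:
  assumes "subgroup_set H" "h \<in> H"
  shows "(\<lambda>x. h + x) ` H = H"
proof
  show "(\<lambda>x. h + x) ` H \<subseteq> H" using assms by (auto simp: subgroup_set_def)
  show "H \<subseteq> (\<lambda>x. h + x) ` H"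
  proof
    fix x assume "x \<in> H"
    hence "- h + x \<in> H" using assms by (auto simp: subgroup_set_def)
    moreover have "x = h + (- h + x)" by (simp add: add.assoc[symmetric])
    ultimately show "x \<in> (\<lambda>x. h + x) ` H" by blast
  qed
qed

lemma lcoset_add_right:
  assumes "subgroup_set H" "h \<in> H"
  shows "lcoset (c + h) H = lcoset c H"
proof -
  have "lcoset (c + h) H = (\<lambda>x. c + x) ` ((\<lambda>x. h + x) ` H)"
    by (simp add: lcoset_def image_image add.assoc)
  thus ?thesis using subgroup_set_translate[OF assms] by (simp add: lcoset_def)
qed

lemma openin_coset_space_top:
  "openin (coset_space_top F H) S \<longleftrightarrow>
     S \<subseteq> (\<lambda>f. lcoset f H) ` F \<and> openin (top_of_set F) {f \<in> F. lcoset f H \<in> S}"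
proof -
  define Op where "Op = (\<lambda>S. S \<subseteq> (\<lambda>f. lcoset f H) ` F \<and>
                               openin (top_of_set F) {f \<in> F. lcoset f H \<in> S})"
  have "istopology Op"
    unfolding istopology_def
  proof (intro conjI allI impI)
    fix S T assume "Op S" "Op T"
    moreover have "{f \<in> F. lcoset f H \<in> S \<inter> T} =
                   {f \<in> F. lcoset f H \<in> S} \<inter> {f \<in> F. lcoset f H \<in> T}" by blast
    ultimately show "Op (S \<inter> T)" unfolding Op_def by (auto intro: openin_Int)
  next
    fix \<K> assume "Ball \<K> Op"
    moreover have "{f \<in> F. lcoset f H \<in> \<Union>\<K>} = (\<Union>S\<in>\<K>. {f \<in> F. lcoset f H \<in> S})" by blast
    ultimately show "Op (\<Union>\<K>)" unfolding Op_def by (auto intro!: openin_Union)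
  qed
  thus ?thesis unfolding coset_space_top_def Op_def by simp
qed

lemma topspace_coset_space_top: "topspace (coset_space_top F H) = (\<lambda>f. lcoset f H) ` F"
proof -
  have "{f \<in> F. lcoset f H \<in> (\<lambda>f. lcoset f H) ` F} = F" by blast
  hence "openin (coset_space_top F H) ((\<lambda>f. lcoset f H) ` F)"
    by (simp add: openin_coset_space_top)
  thus ?thesis
    using openin_subset by (force simp: topspace_def openin_coset_space_top)
qed

lemma continuous_map_coset_projection:
  "continuous_map (top_of_set F) (coset_space_top F H) (\<lambda>f. lcoset f H)"
  unfolding continuous_map_def
  by (auto simp: openin_coset_space_top topspace_coset_space_top)

lemma compact_coset_space_if_compact_transversal:
  assumes "subgroup_set H" "compact C" "C \<subseteq> F"
    and transversal: "\<forall>f\<in>F. \<exists>c\<in>C. \<exists>h\<in>H. f = c + h"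
  shows "compact_space (coset_space_top F H)"
proof -
  have "compactin (top_of_set F) C" using assms(2,3) by (simp add: compactin_subtopology)
  hence "compactin (coset_space_top F H) ((\<lambda>f. lcoset f H) ` C)"
    using continuous_map_coset_projection by (rule image_compactin)
  moreover have "(\<lambda>f. lcoset f H) ` C = (\<lambda>f. lcoset f H) ` F"
    using assms(3) transversal lcoset_add_right[OF assms(1)] by (fastforce simp: image_def)
  ultimately show ?thesis by (simp add: compact_space_def topspace_coset_space_top)
qed

lemma topological_group_translation_continuous:
  assumes "topological_group TYPE('g::{group_add,topological_space})"
  shows "continuous_on UNIV (\<lambda>k::'g. i + k)"
proof -
  have "continuous_on UNIV ((\<lambda>p::'g \<times> 'g. fst p + snd p) \<circ> (\<lambda>k. (i, k)))"
    using assms unfolding topological_group_def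
    by (intro continuous_on_compose) (auto intro!: continuous_intros elim: continuous_on_subset)
  thus ?thesis by (simp add: o_def)
qed

lemma locally_compact_neighbourhood_avoiding:
  fixes x :: "'a::topological_space"
  assumes "locally compact (UNIV :: 'a set)" "x \<notin> closure S"
  obtains U K where "open U" "x \<in> U" "U \<subseteq> K" "compact K" "U \<inter> S = {}"
proof -
  obtain u K where "openin (top_of_set UNIV) u" "compact K" "x \<in> u" "u \<subseteq> K"
    using assms(1) unfolding locally_def by (meson UNIV_I openin_subtopology_self)
  moreover have "open (- closure S)" "x \<in> - closure S" "(- closure S) \<inter> S = {}"
    using assms(2) closure_subset by auto
  ultimately show ?thesis
    by (intro that[of "u \<inter> - closure S" K]) (auto simp: subtopology_UNIV)
qed

locale homogeneous_action =
  fixes act :: "'g::{group_add,topological_space} \<Rightarrow> 'o::t2_space \<Rightarrow> 'o"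
  assumes homogeneous: "homogeneous_space act"
begin

abbreviation orbit_of :: "'g set \<Rightarrow> 'o \<Rightarrow> 'o set" where
  "orbit_of F y \<equiv> (\<lambda>f. act f y) ` F"

lemma act_zero [simp]: "act 0 x = x"
  and act_add: "act (a + b) x = act a (act b x)"
  and act_continuous: "continuous_on UNIV (\<lambda>p. act (fst p) (snd p))"
  and open_orbit_map: "open U \<Longrightarrow> open ((\<lambda>g. act g x) ` U)"
  using homogeneous unfolding homogeneous_space_def by auto

lemma act_neg_cancel [simp]: "act (- f) (act f x) = x"
  by (metis act_add act_zero add.left_inverse)

lemma continuous_act_point: "continuous_on UNIV (act f)"
proof -
  have "continuous_on UNIV ((\<lambda>p. act (fst p) (snd p)) \<circ> (\<lambda>z. (f, z)))"
    by (intro continuous_on_compose)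
       (auto intro!: continuous_intros act_continuous[THEN continuous_on_subset])
  thus ?thesis by (simp add: o_def)
qed

lemma continuous_orbit_map: "continuous_on UNIV (\<lambda>g. act g x)"
proof -
  have "continuous_on UNIV ((\<lambda>p. act (fst p) (snd p)) \<circ> (\<lambda>g. (g, x)))"
    by (intro continuous_on_compose)
       (auto intro!: continuous_intros act_continuous[THEN continuous_on_subset])
  thus ?thesis by (simp add: o_def)
qed

lemma open_act_image: "open W \<Longrightarrow> open (act f ` W)"
proof -
  assume "open W"
  have "act f ` W = act (- f) -` W"
    by (auto simp: image_def) (metis act_neg_cancel add.inverse_inverse)+
  thus ?thesis
    using continuous_act_point[of "- f"] \<open>open W\<close> by (simp add: continuous_on_open_vimage)
qed

lemma subgroup_set_stabilizer: "subgroup_set (stabilizer act y)"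
  by (auto simp: subgroup_set_def stabilizer_def act_add) (metis act_neg_cancel)

lemma act_orbit_closed:
  assumes "subgroup_set F" "f \<in> F" "z \<in> orbit_of F y"
  shows "act f z \<in> orbit_of F y"
  using assms by (auto simp: subgroup_set_def image_def act_add[symmetric])

lemma act_in_orbit_iff:
  assumes "subgroup_set F" "f \<in> F"
  shows "act f z \<in> orbit_of F y \<longleftrightarrow> z \<in> orbit_of F y"
proof
  have "- f \<in> F" using assms by (simp add: subgroup_set_def)
  thus "act f z \<in> orbit_of F y \<Longrightarrow> z \<in> orbit_of F y"
    using act_orbit_closed[OF assms(1)] by (metis act_neg_cancel)
qed (rule act_orbit_closed[OF assms])

text \<open>If every element of an open set U \<subseteq> K (K compact) that moves y into the orbit F y
  already lies in F, then the orbit F y is relatively open in its closure: the neighbourhood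
  U y of y meets the closure only inside the compact set (K \<inter> F) y.\<close>
lemma orbit_open_in_closure:
  assumes "closed F" "open U" "U \<subseteq> K" "compact K"
    and returns: "\<forall>g\<in>U. act g y \<in> orbit_of F y \<longrightarrow> g \<in> F"
  shows "closure (orbit_of F y) \<inter> (\<lambda>g. act g y) ` U \<subseteq> orbit_of F y"
proof -
  let ?V = "(\<lambda>g. act g y) ` U"
  have compact_piece: "compact (orbit_of (K \<inter> F) y)"
    using assms(1,4) by (intro compact_continuous_image continuous_on_subset[OF continuous_orbit_map])
                        (auto simp: compact_Int_closed)
  have "?V \<inter> orbit_of F y \<subseteq> orbit_of (K \<inter> F) y"
  proof
    fix x assume "x \<in> ?V \<inter> orbit_of F y"
    then obtain g where "g \<in> U" "x = act g y" "act g y \<in> orbit_of F y" by blast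
    thus "x \<in> orbit_of (K \<inter> F) y" using returns assms(3) by blast
  qed
  hence "closure (?V \<inter> orbit_of F y) \<subseteq> orbit_of (K \<inter> F) y"
    using compact_piece by (simp add: closure_minimal compact_imp_closed)
  moreover have "closure (orbit_of F y) \<inter> ?V \<subseteq> closure (?V \<inter> orbit_of F y)"
    using open_Int_closure_subset[OF open_orbit_map[OF assms(2)]] by blast
  ultimately show ?thesis by blast
qed

text \<open>An orbit that is relatively open in its F-minimal closure is closed: the complement
  of the orbit in the closure is closed and F-invariant, hence empty.\<close>
lemma minimal_orbit_closure_eq:
  assumes F: "subgroup_set F" and minimal: "F_minimal act F (closure (orbit_of F y))"
    and "open V" "y \<in> V" and V: "closure (orbit_of F y) \<inter> V \<subseteq> orbit_of F y"
  shows "closure (orbit_of F y) = orbit_of F y"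
proof -
  define Y where "Y = closure (orbit_of F y)"
  have Y_inv: "invariant_under act F Y" using minimal by (simp add: F_minimal_def Y_def)
  have "y \<in> orbit_of F y" using F by (force simp: subgroup_set_def)
  have "Y - orbit_of F y = Y - (\<Union>f\<in>F. act f ` V)"
  proof -
    have "x \<notin> act f ` V" if "x \<in> Y - orbit_of F y" "f \<in> F" for x f
    proof
      assume "x \<in> act f ` V"
      then obtain v where v: "v \<in> V" "x = act f v" by blast
      have "- f \<in> F" using F \<open>f \<in> F\<close> by (simp add: subgroup_set_def)
      hence "act (- f) x \<in> Y" using Y_inv that(1) by (auto simp: invariant_under_def)
      hence "v \<in> Y" using v by simp
      hence "v \<in> orbit_of F y" using V v by (auto simp: Y_def)
      thus False using that act_in_orbit_iff[OF F \<open>f \<in> F\<close>] v by auto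
    qed
    moreover have "orbit_of F y \<subseteq> (\<Union>f\<in>F. act f ` V)" using \<open>y \<in> V\<close> by auto
    ultimately show ?thesis by blast
  qed
  moreover have "closed (Y - (\<Union>f\<in>F. act f ` V))"
    unfolding Y_def by (intro closed_Diff closed_closure open_UN ballI open_act_image \<open>open V\<close>)
  ultimately have "closed (Y - orbit_of F y)" by simp
  moreover have "invariant_under act F (Y - orbit_of F y)"
    using Y_inv act_in_orbit_iff[OF F] by (auto simp: invariant_under_def)
  moreover have "y \<in> Y"
    using \<open>y \<in> orbit_of F y\<close> closure_subset[of "orbit_of F y"] unfolding Y_def by blast
  hence "Y - orbit_of F y \<noteq> Y" using \<open>y \<in> orbit_of F y\<close> by blast
  ultimately have "Y - orbit_of F y = {}"
    using minimal unfolding F_minimal_def Y_def by blast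
  thus ?thesis using closure_subset[of "orbit_of F y"] unfolding Y_def by blast
qed

text \<open>Under the same hypotheses on U, a compact orbit F y gives a compact C \<subseteq> F with
  F = C (F \<inter> G_y): cover F y by finitely many translates f_i (U y) and take the union of the
  compact sets f_i (K \<inter> F).\<close>
lemma compact_orbit_transversal:
  assumes "topological_group TYPE('g)" "closed F" and F: "subgroup_set F"
    and "compact (orbit_of F y)" "open U" "0 \<in> U" "U \<subseteq> K" "compact K"
    and returns: "\<forall>g\<in>U. act g y \<in> orbit_of F y \<longrightarrow> g \<in> F"
  obtains C where "compact C" "C \<subseteq> F" "\<forall>f\<in>F. \<exists>c\<in>C. \<exists>h\<in>F \<inter> stabilizer act y. f = c + h"
proof -
  let ?V = "(\<lambda>g. act g y) ` U"
  have "orbit_of F y \<subseteq> (\<Union>f\<in>F. act f ` ?V)" using \<open>0 \<in> U\<close> by force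
  then obtain I where I: "I \<subseteq> F" "finite I" "orbit_of F y \<subseteq> (\<Union>i\<in>I. act i ` ?V)"
    using compactE_image[OF \<open>compact (orbit_of F y)\<close>] open_act_image open_orbit_map[OF \<open>open U\<close>]
    by metis
  define C where "C = (\<Union>i\<in>I. (\<lambda>k. i + k) ` (K \<inter> F))"
  have "compact C" unfolding C_def using I(2) assms(2,8)
    by (intro compact_UN compact_continuous_image
          continuous_on_subset[OF topological_group_translation_continuous[OF assms(1)]])
       (auto simp: compact_Int_closed)
  moreover have "C \<subseteq> F" using I(1) F by (auto simp: C_def subgroup_set_def)
  moreover have "\<exists>c\<in>C. \<exists>h\<in>F \<inter> stabilizer act y. f = c + h" if "f \<in> F" for f
  proof -
    obtain i k where ik: "i \<in> I" "k \<in> U" "act f y = act i (act k y)"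
      using I(3) \<open>f \<in> F\<close> by blast
    have "- i + f \<in> F" using F I(1) ik(1) \<open>f \<in> F\<close> by (auto simp: subgroup_set_def)
    moreover have "act k y = act (- i + f) y" using ik(3) by (simp add: act_add)
    ultimately have "k \<in> F" using returns ik(2) by auto
    define h where "h = - k + (- i + f)"
    have "h \<in> F" using \<open>k \<in> F\<close> \<open>- i + f \<in> F\<close> F by (auto simp: h_def subgroup_set_def)
    moreover have "act h y = y"
    proof -
      have "act h y = act (- k) (act (- i + f) y)" by (simp only: h_def act_add)
      thus ?thesis by (simp only: \<open>act k y = act (- i + f) y\<close>[symmetric] act_neg_cancel)
    qed
    moreover have "i + k \<in> C" using ik(1,2) \<open>k \<in> F\<close> \<open>U \<subseteq> K\<close> by (auto simp: C_def)
    moreover have "f = (i + k) + h" by (simp add: h_def add.assoc)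
    ultimately show ?thesis by (auto simp: stabilizer_def)
  qed
  ultimately show ?thesis using that by blast
qed

end

theorem lemma3p4:
  fixes act :: "'g::{group_add, t2_space, second_countable_topology} \<Rightarrow> 'o::t2_space \<Rightarrow> 'o"
    and F :: "'g set" and y :: 'o
  assumes "topological_group TYPE('g)"
    and "locally compact (UNIV :: 'g set)"
    and "homogeneous_space act"
    and "closed_subgroup F"
    and "compact (closure ((\<lambda>f. act f y) ` F))"
    and "F_minimal act F (closure ((\<lambda>f. act f y) ` F))"
    and "\<not> compact_space (coset_space_top F (F \<inter> stabilizer act y))"
  shows "0 \<in> closure {g. g \<notin> F \<and> act g y \<in> (\<lambda>f. act f y) ` F}"
proof (rule ccontr)
  interpret homogeneous_action act using assms(3) by unfold_locales
  have F: "subgroup_set F" "closed F"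
    using assms(4) by (auto simp: closed_subgroup_imp_subgroup_set closed_subgroup_def)
  assume "0 \<notin> closure {g. g \<notin> F \<and> act g y \<in> orbit_of F y}"
  then obtain U K where U: "open U" "0 \<in> U" "U \<subseteq> K" "compact K"
    and avoid: "U \<inter> {g. g \<notin> F \<and> act g y \<in> orbit_of F y} = {}"
    by (rule locally_compact_neighbourhood_avoiding[OF assms(2)])
  hence returns: "\<forall>g\<in>U. act g y \<in> orbit_of F y \<longrightarrow> g \<in> F" by blast
  have "y \<in> (\<lambda>g. act g y) ` U" using \<open>0 \<in> U\<close> by (rule rev_image_eqI) simp
  hence "closure (orbit_of F y) = orbit_of F y"
    by (rule minimal_orbit_closure_eq[OF F(1) assms(6) open_orbit_map[OF \<open>open U\<close>]])
       (rule orbit_open_in_closure[OF F(2) \<open>open U\<close> U(3,4) returns])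
  hence "compact (orbit_of F y)" using assms(5) by simp
  then obtain C where "compact C" "C \<subseteq> F"
    and "\<forall>f\<in>F. \<exists>c\<in>C. \<exists>h\<in>F \<inter> stabilizer act y. f = c + h"
    by (rule compact_orbit_transversal[OF assms(1) F(2,1) _ U returns])
  hence "compact_space (coset_space_top F (F \<inter> stabilizer act y))"
    by (rule compact_coset_space_if_compact_transversal[OF
          subgroup_set_Int[OF F(1) subgroup_set_stabilizer]])
  thus False using assms(7) by contradiction
qed

end
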